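(* There is an absolute constant $C>0$ such that the following holds. Let $B$ be a set of $n\ge 2$ natural numbers and let $B.B=\{bb' : b,b'\in B\}$. If $B.B$ contains an arithmetic progression $\{a, a+d, \ldots, a+(N-1)d\}$ with nonzero common difference $d$ and $N$ terms, then $N\le C\, n\log n$. *)

theory Defs
  imports "HOL-Analysis.Analysis"
begin

definition prodset :: "nat set \<Rightarrow> nat set" where
  "prodset B = {b * b' | b b'. b \<in> B \<and> b' \<in> B}"

end

theory Submission
  imports Defs "HOL-Library.Function_Algebras" "HOL-Computational_Algebra.Primes"
    "HOL-Real_Asymp.Real_Asymp"
begin

text \<open>
  Dividing by \<open>gcd a d\<close> and reading the progression backwards if \<open>d > 0\<close>, its terms become
  \<open>g (M - j D)\<close>, \<open>j < N\<close>, with \<open>M\<close> and \<open>D\<close> coprime. Put \<open>h = N div 2\<close> and \<open>y = h div 1024\<close>.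
  The terms \<open>e\<^sub>j = M - j D\<close>, \<open>j < h\<close>, are at least \<open>M/2\<close>, yet a Legendre-type count of prime
  powers in a progression shows \<open>\<Prod> e\<^sub>j \<le> h! M^(\<pi>(y) + r)\<close>, where \<open>r\<close> is the number of \<open>e\<^sub>j\<close>
  with a prime factor \<open>p > y\<close>. Hence \<open>\<pi>(y) + r \<ge> h / (20 ln (2h))\<close>, and by Chebyshev's bound
  \<open>\<pi>(y)\<close> is at most half of this. A prime \<open>p > y\<close> divides at most one term in a window of \<open>y\<close>
  consecutive indices, so some window contains \<open>\<ge> h / (81960 ln (2h))\<close> terms each having a prime
  factor that divides none of the others. The exponent vectors of these terms are therefore
  linearly independent; as \<open>g e\<^sub>j = b b'\<close> with \<open>b, b' \<in> B\<close>, they lie in the span of the exponent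
  vectors of \<open>g\<close> and of the elements of \<open>B\<close>, so there are at most \<open>|B| + 1\<close> of them. With
  \<open>N \<le> |B|\<^sup>2\<close> this gives \<open>N = O(|B| ln |B|)\<close>.
\<close>

section \<open>Chebyshev's bound for the prime counting function\<close>

lemma prod_primes_dvd:
  fixes n :: nat
  assumes "finite A" "\<And>p. p \<in> A \<Longrightarrow> prime p" "\<And>p. p \<in> A \<Longrightarrow> p dvd n"
  shows "\<Prod>A dvd n"
  using assms
proof (induction A rule: finite_induct)
  case empty
  then show ?case by simp
next
  case (insert p A)
  have "prime p"
    using insert.prems by simp
  have "\<not> p dvd \<Prod>A"
  proof
    assume "p dvd \<Prod>A"
    then obtain q where "q \<in> A" "p dvd q"
      using \<open>prime p\<close> insert.hyps(1) prime_dvd_prod_iff[of A p id] by auto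
    then have "p = q"
      using \<open>prime p\<close> insert.prems primes_dvd_imp_eq by blast
    with \<open>q \<in> A\<close> insert.hyps(2) show False
      by simp
  qed
  then have "coprime p (\<Prod>A)"
    using \<open>prime p\<close> by (simp add: prime_imp_coprime)
  moreover have "p dvd n" "\<Prod>A dvd n"
    using insert by auto
  ultimately show ?case
    using insert.hyps by (simp add: divides_mult)
qed

lemma binomial_odd_middle_le: "(2*m+1) choose m \<le> 4^m"
proof -
  have "2 * ((2*m+1) choose m) = (\<Sum>k\<in>{m, m+1}. (2*m+1) choose k)"
    using binomial_symmetric[of m "2*m+1"] by simp
  also have "\<dots> \<le> (\<Sum>k\<le>2*m+1. (2*m+1) choose k)"
    by (rule sum_mono2) auto
  also have "\<dots> = 2^(2*m+1)"
    by (rule choose_row_sum)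
  finally show ?thesis
    by (simp add: power_add power_mult)
qed

lemma prod_primes_dvd_binomial:
  "\<Prod>{p. prime p \<and> m+1 < p \<and> p \<le> 2*m+1} dvd (2*m+1) choose m"
proof (rule prod_primes_dvd)
  fix p assume p: "p \<in> {p. prime p \<and> m+1 < p \<and> p \<le> 2*m+1}"
  then have "prime p" by simp
  have "p dvd fact (2*m+1)"
    unfolding prime_dvd_fact_iff[OF \<open>prime p\<close>] using p by simp
  then have "p dvd fact m * fact (m+1) * ((2*m+1) choose m)"
    using binomial_fact_lemma[of m "2*m+1"] by (simp add: algebra_simps)
  moreover have "\<not> p dvd fact m" "\<not> p dvd fact (m+1)"
    unfolding prime_dvd_fact_iff[OF \<open>prime p\<close>] using p by auto
  ultimately show "p dvd (2*m+1) choose m"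
    using \<open>prime p\<close> by (metis prime_dvd_mult_iff)
qed auto

lemma primes_atMost_two: "{p::nat. prime p \<and> p \<le> 2} = {2}"
  by (auto simp: le_Suc_eq dest: prime_ge_2_nat)

text \<open>For odd \<open>x = 2m + 1\<close> the primes in \<open>(m + 1, x]\<close> divide \<open>(x choose m) \<le> 4^m\<close>; an even
  \<open>x > 2\<close> is not prime.\<close>
lemma primorial_le_four_power: "\<Prod>{p::nat. prime p \<and> p \<le> x} \<le> 4^x"
proof (induction x rule: less_induct)
  case (less x)
  have "x \<le> 1 \<or> x = 2 \<or> (x > 2 \<and> even x) \<or> (\<exists>m. x = 2*m+1 \<and> m \<ge> 1)"
    by presburger
  then consider "x \<le> 1" | "x = 2" | "x > 2" "even x" | m where "x = 2*m+1" "m \<ge> 1"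
    by blast
  then show ?case
  proof cases
    case 1
    then have none: "{p::nat. prime p \<and> p \<le> x} = {}"
      by (auto dest: prime_ge_2_nat)
    show ?thesis
      unfolding none by simp
  next
    case 2
    then show ?thesis
      by (simp add: primes_atMost_two)
  next
    case 3
    then have "\<not> prime x"
      using prime_odd_nat[of x] by blast
    then have "{p::nat. prime p \<and> p \<le> x} = {p. prime p \<and> p \<le> x - 1}"
      using 3 by (auto simp: le_diff_conv2 le_less Suc_le_eq)
    then have "\<Prod>{p::nat. prime p \<and> p \<le> x} \<le> 4^(x-1)"
      using less[of "x-1"] 3 by simp
    also have "\<dots> \<le> 4^x"
      by (rule power_increasing) auto
    finally show ?thesis .
  next
    case 4
    let ?small = "{p::nat. prime p \<and> p \<le> m+1}" and ?large = "{p::nat. prime p \<and> m+1 < p \<and> p \<le> x}"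
    have "{p::nat. prime p \<and> p \<le> x} = ?small \<union> ?large"
      using 4 by auto
    then have "\<Prod>{p::nat. prime p \<and> p \<le> x} = \<Prod>?small * \<Prod>?large"
      by (simp add: prod.union_disjoint[symmetric] disjoint_iff)
    also have "\<Prod>?small \<le> 4^(m+1)"
      using less[of "m+1"] 4 by simp
    also have "\<Prod>?large \<le> 4^m"
      using dvd_imp_le[OF prod_primes_dvd_binomial[of m]] binomial_odd_middle_le[of m] 4 by simp
    finally have "\<Prod>{p::nat. prime p \<and> p \<le> x} \<le> 4^(m+1) * 4^m"
      by simp
    also have "\<dots> = 4^x"
      using 4 by (simp flip: power_add)
    finally show ?thesis .
  qed
qed

lemma sum_ln_primes_le: "(\<Sum>p | prime p \<and> p \<le> x. ln (real p)) \<le> real x * ln 4"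
proof -
  have "(\<Sum>p | prime p \<and> p \<le> x. ln (real p)) = ln (\<Prod>p | prime p \<and> p \<le> x. real p)"
    by (rule ln_prod[symmetric]) (auto simp: prime_gt_0_nat)
  also have "\<dots> \<le> ln (real (4^x))"
    using primorial_le_four_power[of x]
    by (intro ln_mono) (simp_all add: prime_gt_0_nat prod_pos flip: of_nat_prod of_nat_le_iff)
  also have "\<dots> = real x * ln 4"
    by (simp add: ln_realpow)
  finally show ?thesis .
qed

lemma card_le_sqrt:
  fixes A :: "nat set"
  assumes "\<And>k. k \<in> A \<Longrightarrow> 0 < k \<and> k * k \<le> y"
  shows "real (card A) \<le> sqrt y"
proof -
  have "A \<subseteq> {1..nat \<lfloor>sqrt y\<rfloor>}"
  proof
    fix k assume "k \<in> A"
    then have "0 < k" "real k * real k \<le> real y"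
      using assms by (auto simp flip: of_nat_mult)
    then show "k \<in> {1..nat \<lfloor>sqrt y\<rfloor>}"
      using real_le_rsqrt[of "real k" "real y"] by (simp add: power2_eq_square le_nat_floor)
  qed
  then have "card A \<le> nat \<lfloor>sqrt y\<rfloor>"
    using card_mono[of "{1..nat \<lfloor>sqrt y\<rfloor>}" A] by simp
  then have "real (card A) \<le> real (nat \<lfloor>sqrt y\<rfloor>)"
    by (simp only: of_nat_le_iff)
  also have "\<dots> \<le> sqrt y"
    by (rule of_nat_floor) simp
  finally show ?thesis .
qed

text \<open>Primes \<open>p \<le> \<surd>y\<close> are counted trivially; each larger one has \<open>ln p \<ge> ln y / 2\<close>.\<close>
lemma prime_counting_le:
  fixes y :: nat
  assumes "y \<ge> 2"
  shows "real (card {p. prime p \<and> p \<le> y}) \<le> sqrt y + 2 * y * ln 4 / ln y"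
proof -
  define P where "P = {p::nat. prime p \<and> p \<le> y}"
  define small where "small = {p\<in>P. p*p \<le> y}"
  define large where "large = {p\<in>P. y < p*p}"
  have "finite P"
    unfolding P_def by (rule finite_subset[of _ "{..y}"]) auto
  then have card_P: "card P = card small + card large"
    unfolding small_def large_def by (subst card_Un_disjoint[symmetric]) (auto intro: arg_cong[where f = card])
  have "real (card small) \<le> sqrt y"
    by (rule card_le_sqrt) (auto simp: small_def P_def prime_gt_0_nat)
  moreover have "real (card large) * ln y \<le> 2 * y * ln 4"
  proof -
    have "real (card large) * ln y = (\<Sum>p\<in>large. ln y)"
      by simp
    also have "\<dots> \<le> (\<Sum>p\<in>large. 2 * ln (real p))"
    proof (rule sum_mono)
      fix p assume "p \<in> large"
      then have "real y < real p * real p" "prime p"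
        unfolding large_def P_def by (auto simp flip: of_nat_mult)
      then have "ln y \<le> ln (real p * real p)"
        using assms by (intro ln_mono) auto
      also have "\<dots> = 2 * ln (real p)"
        using \<open>prime p\<close> by (simp add: ln_mult prime_gt_0_nat)
      finally show "ln y \<le> 2 * ln (real p)" .
    qed
    also have "\<dots> \<le> 2 * (\<Sum>p\<in>P. ln (real p))"
      unfolding sum_distrib_left[symmetric] using \<open>finite P\<close>
      by (intro mult_left_mono sum_mono2) (auto simp: large_def P_def dest: prime_ge_1_nat)
    also have "\<dots> \<le> 2 * y * ln 4"
      using sum_ln_primes_le[of y] unfolding P_def by simp
    finally show ?thesis .
  qed
  then have "real (card large) \<le> 2 * y * ln 4 / ln y"
    using assms by (simp add: field_simps)
  ultimately show ?thesis
    using card_P unfolding P_def by simp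
qed

lemma prime_counting_negligible:
  obtains H :: nat
  where "\<And>h. H \<le> h \<Longrightarrow> real (card {p. prime p \<and> p \<le> h div 1024}) \<le> real h / (40 * ln (2 * real h))"
proof -
  have "eventually (\<lambda>x::real. sqrt (x / 1024) + 4 * (x / 1024) / ln (x / 2048) \<le> x / (40 * ln (2 * x))) at_top"
    by real_asymp
  then obtain X where X: "\<And>x::real. X \<le> x \<Longrightarrow> sqrt (x / 1024) + 4 * (x / 1024) / ln (x / 2048) \<le> x / (40 * ln (2 * x))"
    unfolding eventually_at_top_linorder by blast
  have "ln 4 \<le> (2::real)"
    using ln2_le_25_over_36 ln_realpow[of 2 2] by simp
  show ?thesis
  proof (rule that[of "max 4096 (nat \<lceil>X\<rceil>)"])
    fix h :: nat assume "max 4096 (nat \<lceil>X\<rceil>) \<le> h"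
    then have "4096 \<le> h" "X \<le> real h"
      by linarith+
    define y where "y = h div 1024"
    have "real y \<le> real h / 1024"
      unfolding y_def by (simp add: real_of_nat_div)
    have "real h / 2048 \<le> real y" "2 \<le> y"
      using \<open>4096 \<le> h\<close> unfolding y_def by linarith+
    have "real (2 * y) * ln 4 \<le> real (2 * y) * 2"
      using \<open>ln 4 \<le> 2\<close> by (intro mult_left_mono) auto
    then have "real (2 * y) * ln 4 \<le> 4 * (real h / 1024)"
      using \<open>real y \<le> real h / 1024\<close> by linarith
    moreover have "ln (real h / 2048) \<le> ln y"
      using \<open>real h / 2048 \<le> real y\<close> \<open>4096 \<le> h\<close> by (intro ln_mono) auto
    ultimately have "2 * y * ln 4 / ln y \<le> 4 * (real h / 1024) / ln (real h / 2048)"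
      using \<open>4096 \<le> h\<close> by (intro frac_le) simp_all
    moreover have "sqrt y \<le> sqrt (real h / 1024)"
      using \<open>real y \<le> real h / 1024\<close> by simp
    ultimately show "real (card {p. prime p \<and> p \<le> h div 1024}) \<le> real h / (40 * ln (2 * real h))"
      using prime_counting_le[OF \<open>2 \<le> y\<close>] X[OF \<open>X \<le> real h\<close>] unfolding y_def by linarith
  qed
qed

section \<open>Prime powers dividing terms of a progression\<close>

lemma sum_card_filter_swap:
  assumes "finite J" "finite K"
  shows "(\<Sum>j\<in>J. card {k\<in>K. P j k}) = (\<Sum>k\<in>K. card {j\<in>J. P j k})"
proof -
  have "(\<Sum>j\<in>J. card {k\<in>K. P j k}) = (\<Sum>j\<in>J. \<Sum>k\<in>K. if P j k then 1 else 0)"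
    using assms by (simp add: sum.If_cases Int_def)
  also have "\<dots> = (\<Sum>k\<in>K. \<Sum>j\<in>J. if P j k then 1 else 0)"
    by (rule sum.swap)
  also have "\<dots> = (\<Sum>k\<in>K. card {j\<in>J. P j k})"
    using assms by (simp add: sum.If_cases Int_def)
  finally show ?thesis .
qed

lemma multiplicity_less_self:
  fixes q x :: nat
  assumes "prime q" "x > 0"
  shows "multiplicity q x < x"
proof -
  have "multiplicity q x < 2 ^ multiplicity q x"
    by (rule less_exp)
  also have "\<dots> \<le> q ^ multiplicity q x"
    using assms prime_ge_2_nat by (simp add: power_mono)
  also have "\<dots> \<le> x"
    using assms multiplicity_dvd[of q x] by (simp add: dvd_imp_le)
  finally show ?thesis .
qed

lemma multiplicity_eq_card_prime_powers_dvd: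
  fixes q x K :: nat
  assumes "prime q" "x > 0" "multiplicity q x \<le> K"
  shows "multiplicity q x = card {k\<in>{1..K}. q^k dvd x}"
proof -
  have "\<not> is_unit q"
    using assms(1) not_prime_unit by blast
  then have dvd_iff: "q^k dvd x \<longleftrightarrow> k \<le> multiplicity q x" for k
    using assms(2) power_dvd_iff_le_multiplicity[of x q k] by simp
  have "{k\<in>{1..K}. q^k dvd x} = {1..multiplicity q x}"
  proof (rule set_eqI)
    show "k \<in> {k\<in>{1..K}. q^k dvd x} \<longleftrightarrow> k \<in> {1..multiplicity q x}" for k
      using dvd_iff[of k] assms(3) by auto
  qed
  then show ?thesis
    by simp
qed

lemma dvd_ap_terms_imp_dvd_index_diff:
  fixes q D M j l :: nat
  assumes "coprime q D" "j * D \<le> M" "l * D \<le> M" "q dvd M - j * D" "q dvd M - l * D"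
  shows "int q dvd int j - int l"
proof -
  have "int q dvd int (M - l * D) - int (M - j * D)"
    using assms(4,5) by simp
  then have "int q dvd (int j - int l) * int D"
    using assms(2,3) by (simp add: algebra_simps)
  then show ?thesis
    using assms(1) by (simp add: coprime_dvd_mult_left_iff)
qed

lemma card_ap_terms_dvd_le:
  fixes q D M h :: nat
  assumes "q > 0" "coprime q D" "(h - 1) * D \<le> M"
  shows "card {j\<in>{..<h}. q dvd (M - j*D)} \<le> h div q + 1"
proof -
  let ?J = "{j\<in>{..<h}. q dvd (M - j*D)}"
  have le_M: "j * D \<le> M" if "j \<in> ?J" for j
  proof -
    have "j * D \<le> (h - 1) * D"
      using that by (intro mult_le_mono1) auto
    then show ?thesis
      using assms(3) by linarith
  qed
  have same_residue: "j mod q = l mod q" if "j \<in> ?J" "l \<in> ?J" for j l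
  proof -
    have "j * D \<le> M" "l * D \<le> M" "q dvd M - j * D" "q dvd M - l * D"
      using that le_M by auto
    then have "int q dvd int j - int l"
      by (rule dvd_ap_terms_imp_dvd_index_diff[OF assms(2)])
    then have "int j mod int q = int l mod int q"
      by (simp add: mod_eq_dvd_iff)
    then show ?thesis
      by (simp flip: of_nat_mod)
  qed
  have "inj_on (\<lambda>j. j div q) ?J"
  proof (rule inj_onI)
    fix j l assume "j \<in> ?J" "l \<in> ?J" "j div q = l div q"
    moreover from \<open>j \<in> ?J\<close> \<open>l \<in> ?J\<close> have "j mod q = l mod q"
      by (rule same_residue)
    ultimately show "j = l"
      by (metis div_mult_mod_eq)
  qed
  moreover have "(\<lambda>j. j div q) ` ?J \<subseteq> {..(h - 1) div q}"
    by (auto intro!: div_le_mono)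
  ultimately have "card ?J \<le> card {..(h - 1) div q}"
    by (intro card_inj_on_le) auto
  also have "\<dots> \<le> h div q + 1"
    by (simp add: div_le_mono)
  finally show ?thesis .
qed

lemma div_le_card_multiples:
  fixes q h :: nat
  assumes "q > 0"
  shows "h div q \<le> card {m\<in>{1..h}. q dvd m}"
proof -
  have "(\<lambda>k. k * q) ` {1..h div q} \<subseteq> {m\<in>{1..h}. q dvd m}"
    using assms by (auto simp: less_eq_div_iff_mult_less_eq)
  moreover have "inj_on (\<lambda>k. k * q) {1..h div q}"
    using assms by (auto simp: inj_on_def)
  ultimately have "card ((\<lambda>k. k * q) ` {1..h div q}) \<le> card {m\<in>{1..h}. q dvd m}"
    by (intro card_mono) auto
  with \<open>inj_on (\<lambda>k. k * q) {1..h div q}\<close> show ?thesis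
    by (simp add: card_image)
qed

lemma power_card_le:
  fixes p M :: nat
  assumes "p > 0" "M > 0"
  shows "p ^ card {k\<in>{1..M}. p^k \<le> M} \<le> M"
proof (cases "{k\<in>{1..M}. p^k \<le> M} = {}")
  case True
  then show ?thesis
    using assms by (metis card.empty power_0 Suc_leI One_nat_def)
next
  case False
  let ?K = "{k\<in>{1..M}. p^k \<le> M}"
  have "card ?K \<le> Max ?K"
    using card_mono[of "{1..Max ?K}" ?K] by (auto simp: subset_eq)
  then have "p ^ card ?K \<le> p ^ Max ?K"
    using assms by (simp add: power_increasing)
  also have "\<dots> \<le> M"
    using Max_in[of ?K] False by auto
  finally show ?thesis .
qed

section \<open>Exponent vectors\<close>

interpretation fun_space: vector_space "\<lambda>(c::real) (f::nat \<Rightarrow> real) p. c * f p"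
  by unfold_locales (auto simp: fun_eq_iff algebra_simps)

lemma sum_fun_apply: "(\<Sum>x\<in>A. f x) p = (\<Sum>x\<in>A. f x p)"
  by (induction A rule: infinite_finite_induct) auto

text \<open>Evaluating a vanishing linear combination of the \<open>z k\<close> at \<open>P k\<close> shows that its \<open>k\<close>-th
  coefficient is zero, so the family is linearly independent.\<close>
lemma card_le_card_spanning_if_private_coordinates:
  fixes z :: "'i \<Rightarrow> nat \<Rightarrow> real" and P :: "'i \<Rightarrow> nat"
  assumes "finite \<Lambda>" "finite W"
    and isolated: "\<And>k. k \<in> \<Lambda> \<Longrightarrow> z k (P k) \<noteq> 0"
      "\<And>k l. k \<in> \<Lambda> \<Longrightarrow> l \<in> \<Lambda> \<Longrightarrow> l \<noteq> k \<Longrightarrow> z l (P k) = 0"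
    and span: "\<And>k. k \<in> \<Lambda> \<Longrightarrow> z k \<in> fun_space.span W"
  shows "card \<Lambda> \<le> card W"
proof -
  have "inj_on z \<Lambda>"
    using isolated by (metis inj_onI)
  have "fun_space.independent (z ` \<Lambda>)"
  proof (rule fun_space.independent_if_scalars_zero)
    show "finite (z ` \<Lambda>)"
      using assms(1) by simp
    fix c x assume zero: "(\<Sum>x\<in>z ` \<Lambda>. (\<lambda>p. c x * x p)) = 0" and "x \<in> z ` \<Lambda>"
    then obtain k where "k \<in> \<Lambda>" "x = z k"
      by auto
    have "0 = (\<Sum>y\<in>z ` \<Lambda>. c y * y (P k))"
      using fun_cong[OF zero, of "P k"] by (simp add: sum_fun_apply)
    also have "\<dots> = (\<Sum>l\<in>\<Lambda>. c (z l) * z l (P k))"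
      using \<open>inj_on z \<Lambda>\<close> by (simp add: sum.reindex)
    also have "\<dots> = c (z k) * z k (P k)"
      using assms(1) \<open>k \<in> \<Lambda>\<close> isolated(2) by (subst sum.remove[of _ k]) auto
    finally show "c x = 0"
      using isolated(1)[OF \<open>k \<in> \<Lambda>\<close>] \<open>x = z k\<close> by simp
  qed
  then have "card (z ` \<Lambda>) \<le> card W"
    using fun_space.independent_span_bound[OF assms(2)] span by auto
  then show ?thesis
    using \<open>inj_on z \<Lambda>\<close> by (simp add: card_image)
qed

definition exponent_vector :: "nat \<Rightarrow> nat \<Rightarrow> real" where
  "exponent_vector x p = (if prime p then real (multiplicity p x) else 0)"

lemma exponent_vector_mult:
  "x \<noteq> 0 \<Longrightarrow> y \<noteq> 0 \<Longrightarrow> exponent_vector (x * y) = exponent_vector x + exponent_vector y"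
  by (auto simp: exponent_vector_def fun_eq_iff prime_elem_multiplicity_mult_distrib)

text \<open>The exponent vectors of the \<open>e k\<close> are independent thanks to the prime divisors \<open>P k\<close>, and
  \<open>g e k = b b'\<close> puts them in the span of the exponent vectors of \<open>g\<close> and of the elements of \<open>B\<close>.\<close>
lemma card_le_if_private_prime_divisors:
  fixes e P :: "'i \<Rightarrow> nat"
  assumes "finite B" "0 < g" "finite \<Lambda>"
    and prod: "\<And>k. k \<in> \<Lambda> \<Longrightarrow> 0 < e k \<and> g * e k \<in> prodset B"
    and primes: "\<And>k. k \<in> \<Lambda> \<Longrightarrow> prime (P k) \<and> P k dvd e k"
    and isolated: "\<And>k l. k \<in> \<Lambda> \<Longrightarrow> l \<in> \<Lambda> \<Longrightarrow> l \<noteq> k \<Longrightarrow> \<not> P k dvd e l"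
  shows "card \<Lambda> \<le> card B + 1"
proof -
  define W where "W = insert (exponent_vector g) (exponent_vector ` B)"
  have "card \<Lambda> \<le> card W"
  proof (rule card_le_card_spanning_if_private_coordinates[of _ _ "\<lambda>k. exponent_vector (e k)" P])
    show "finite W"
      using assms(1) by (simp add: W_def)
    fix k assume "k \<in> \<Lambda>"
    then show "exponent_vector (e k) (P k) \<noteq> 0"
      using prod primes by (simp add: exponent_vector_def prime_multiplicity_gt_zero_iff)
    show "exponent_vector (e l) (P k) = 0" if "l \<in> \<Lambda>" "l \<noteq> k" for l
      using isolated[OF \<open>k \<in> \<Lambda>\<close> that] by (simp add: exponent_vector_def not_dvd_imp_multiplicity_0)
    obtain b b' where "b \<in> B" "b' \<in> B" "b * b' = g * e k"
      using prod[OF \<open>k \<in> \<Lambda>\<close>] by (auto simp: prodset_def)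
    moreover from this(3) have "b \<noteq> 0" "b' \<noteq> 0"
      using \<open>0 < g\<close> prod[OF \<open>k \<in> \<Lambda>\<close>] by (metis mult_is_0 neq0_conv)+
    ultimately have "exponent_vector g + exponent_vector (e k) = exponent_vector b + exponent_vector b'"
      using \<open>0 < g\<close> prod[OF \<open>k \<in> \<Lambda>\<close>] by (simp flip: exponent_vector_mult)
    then have "exponent_vector (e k) = exponent_vector b + exponent_vector b' - exponent_vector g"
      by (simp add: algebra_simps)
    moreover have "exponent_vector b \<in> fun_space.span W" "exponent_vector b' \<in> fun_space.span W"
        "exponent_vector g \<in> fun_space.span W"
      using \<open>b \<in> B\<close> \<open>b' \<in> B\<close> by (auto simp: W_def intro: fun_space.span_base)
    ultimately show "exponent_vector (e k) \<in> fun_space.span W"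
      by (simp add: fun_space.span_add fun_space.span_diff)
  qed (use assms(3) in simp)
  also have "card W \<le> card B + 1"
    using assms(1) card_image_le[of B exponent_vector] by (simp add: W_def card_insert_if)
  finally show ?thesis .
qed

section \<open>The upper half of a reduced progression\<close>

text \<open>Here \<open>L\<close> stands for \<open>ln M\<close>. If \<open>L \<le> 4 ln (2h)\<close> the first hypothesis gives the bound;
  otherwise the second one forces \<open>S \<ge> 3h/4\<close>.\<close>
lemma exponent_lower_bound:
  fixes h :: nat and L S :: real
  assumes "5 \<le> h" "0 < L" "0 \<le> S"
    and small: "real (h div 2) * ln 2 \<le> S * L"
    and large: "real h * (L - ln 2) \<le> real h * ln (real h) + S * L"
  shows "real h / (20 * ln (2 * real h)) \<le> S"
proof -
  have ln2: "1/2 \<le> ln (2::real)"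
    using ln2_ge_two_thirds by simp
  have "0 < ln (2 * real h)"
    using assms(1) by simp
  show ?thesis
  proof (cases "L \<le> 4 * ln (2 * real h)")
    case True
    have "h \<le> 2 * (h div 2) + 1"
      by presburger
    then have "real h \<le> real (2 * (h div 2) + 1)"
      by (simp only: of_nat_le_iff)
    then have "(real h - 1) / 2 \<le> real (h div 2)"
      by simp
    then have "(real h - 1) / 2 * (1/2) \<le> real (h div 2) * ln 2"
      using ln2 by (intro mult_mono) auto
    also have "\<dots> \<le> S * (4 * ln (2 * real h))"
      using small True \<open>0 \<le> S\<close> by (meson mult_left_mono order.trans)
    finally show ?thesis
      using \<open>0 < ln (2 * real h)\<close> assms(1) by (simp add: field_simps)
  next
    case False
    have "ln (2 * real h) = ln 2 + ln (real h)"
      using assms(1) by (simp add: ln_mult)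
    with False have "real h * (3/4 * L) \<le> real h * (L - ln 2 - ln (real h))"
      by (intro mult_left_mono) auto
    also have "\<dots> \<le> S * L"
      using large by (simp add: algebra_simps)
    finally have "real h * (3/4) \<le> S"
      using \<open>0 < L\<close> by (simp add: mult.commute mult.left_commute)
    moreover have "ln 2 \<le> ln (2 * real h)"
      using assms(1) by simp
    then have "real h / (20 * ln (2 * real h)) \<le> real h / (20 * (1/2))"
      using ln2 by (intro divide_left_mono) auto
    ultimately show ?thesis
      by simp
  qed
qed

lemma exists_dense_window:
  fixes R :: "nat set"
  assumes "R \<subseteq> {..<h}" "0 < y"
  obtains w where "card R \<le> card {j\<in>R. w \<le> j \<and> j < w + y} * (h div y + 1)"
proof -
  have "\<exists>w. card R \<le> card {j\<in>R. w \<le> j \<and> j < w + y} * (h div y + 1)"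
  proof (rule ccontr)
    assume "\<nexists>w. card R \<le> card {j\<in>R. w \<le> j \<and> j < w + y} * (h div y + 1)"
    then have sparse: "card {j\<in>R. w \<le> j \<and> j < w + y} * (h div y + 1) < card R" for w
      by (meson not_le)
    let ?W = "\<lambda>i. {j\<in>R. i*y \<le> j \<and> j < i*y + y}"
    have "finite R"
      using assms(1) finite_subset by blast
    have "R \<subseteq> (\<Union>i\<in>{..h div y}. ?W i)"
    proof
      fix j assume "j \<in> R"
      moreover have "(j div y) * y \<le> j" "j < (j div y) * y + y"
        using assms(2) div_mult_mod_eq[of j y] mod_less_divisor[of y j] by linarith+
      moreover have "j div y \<le> h div y"
        using \<open>j \<in> R\<close> assms(1) by (intro div_le_mono) auto
      ultimately show "j \<in> (\<Union>i\<in>{..h div y}. ?W i)"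
        by blast
    qed
    then have "card R \<le> card (\<Union>i\<in>{..h div y}. ?W i)"
      using \<open>finite R\<close> by (intro card_mono) auto
    also have "\<dots> \<le> (\<Sum>i\<in>{..h div y}. card (?W i))"
      by (rule card_UN_le) simp
    finally have "card R * (h div y + 1) \<le> (\<Sum>i\<in>{..h div y}. card (?W i)) * (h div y + 1)"
      by (rule mult_le_mono1)
    also have "\<dots> = (\<Sum>i\<in>{..h div y}. card (?W i) * (h div y + 1))"
      by (rule sum_distrib_right)
    also have "\<dots> < (\<Sum>i\<in>{..h div y}. card R)"
      using sparse by (intro sum_strict_mono) auto
    finally show False
      by simp
  qed
  then show ?thesis
    using that by blast
qed

text \<open>The assumption \<open>(2h - 1) D \<le> M\<close> says that the progression \<open>M - j D\<close>, \<open>j < 2h\<close>, is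
  nonnegative; the locale studies its first half.\<close>
locale ap_upper_half =
  fixes h D M :: nat
  assumes h_pos: "0 < h" and D_pos: "0 < D" and coprime_M_D: "coprime M D"
    and long: "(2*h - 1) * D \<le> M"
begin

lemma index_mult_le: "j < 2*h \<Longrightarrow> j * D \<le> M"
  using long mult_le_mono1[of j "2*h - 1" D] by linarith

lemma term_ge:
  assumes "j < h"
  shows "(2*h - 1 - j) * D \<le> M - j * D"
proof -
  have "(2*h - 1 - j) * D + j * D = (2*h - 1) * D"
    using assms by (simp flip: add_mult_distrib)
  then show ?thesis
    using long by linarith
qed

lemma term_pos: "j < h \<Longrightarrow> 0 < M - j * D"
  using term_ge[of j] D_pos mult_le_mono[of 1 "2*h - 1 - j" 1 D] by linarith

lemma prod_terms_pos: "A \<subseteq> {..<h} \<Longrightarrow> 0 < (\<Prod>j\<in>A. M - j * D)"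
  by (intro prod_pos term_pos) auto

lemma M_pos: "0 < M"
  using term_pos[of 0] h_pos by simp

lemma h_le_M: "h \<le> M"
  using long D_pos mult_le_mono[of h "2*h - 1" 1 D] by linarith

lemma M_le_twice_term: "j < h \<Longrightarrow> M \<le> 2 * (M - j * D)"
  using index_mult_le[of "2*j"] by simp

lemma coprime_term_D: "j < h \<Longrightarrow> coprime (M - j * D) D"
proof (rule coprimeI)
  fix c assume "j < h" "c dvd M - j * D" "c dvd D"
  then have "c dvd (M - j * D) + j * D"
    by simp
  with \<open>j < h\<close> have "c dvd M"
    using index_mult_le[of j] by simp
  with \<open>c dvd D\<close> show "is_unit c"
    using coprime_M_D coprime_common_divisor by blast
qed

lemma card_terms_prime_power_dvd_le:
  assumes "prime q" "0 < k"
  shows "card {j\<in>{..<h}. q^k dvd M - j * D}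
    \<le> card {m\<in>{1..h}. q^k dvd m} + (if q^k \<le> M then 1 else 0)"
proof (cases "q^k \<le> M \<and> \<not> q dvd D")
  case True
  then have "coprime (q^k) D"
    using assms(1) by (simp add: prime_imp_coprime)
  moreover have "(h - 1) * D \<le> M"
    using index_mult_le[of "h - 1"] h_pos by simp
  ultimately have "card {j\<in>{..<h}. q^k dvd M - j * D} \<le> h div q^k + 1"
    using assms(1) by (intro card_ap_terms_dvd_le) (simp_all add: prime_gt_0_nat)
  also have "h div q^k \<le> card {m\<in>{1..h}. q^k dvd m}"
    using assms(1) by (intro div_le_card_multiples) (simp add: prime_gt_0_nat)
  finally show ?thesis
    using True by simp
next
  case False
  have none: "{j\<in>{..<h}. q^k dvd M - j * D} = {}"
  proof (rule ccontr)
    assume "{j\<in>{..<h}. q^k dvd M - j * D} \<noteq> {}"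
    then obtain j where "j < h" "q^k dvd M - j * D"
      by auto
    then have "q^k \<le> M"
      using term_pos[of j] dvd_imp_le[of "q^k" "M - j * D"] by linarith
    with False have "q dvd D"
      by simp
    moreover have "q dvd M - j * D"
      using \<open>q^k dvd M - j * D\<close> assms(2) dvd_power[of k q] dvd_trans by blast
    ultimately show False
      using coprime_term_D[OF \<open>j < h\<close>] assms(1) coprime_common_divisor not_prime_unit by blast
  qed
  show ?thesis
    unfolding none by simp
qed

text \<open>Legendre-type count: \<open>q^k\<close> divides at most one more of the terms than of \<open>1, \<dots>, h\<close>,
  and only when \<open>q^k \<le> M\<close>.\<close>
lemma sum_multiplicity_terms_le:
  assumes "prime q"
  shows "(\<Sum>j<h. multiplicity q (M - j * D))
    \<le> multiplicity q (fact h) + card {k\<in>{1..M}. q^k \<le> M}"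
proof -
  have "(\<Sum>j<h. multiplicity q (M - j * D)) = (\<Sum>j<h. card {k\<in>{1..M}. q^k dvd M - j * D})"
  proof (rule sum.cong[OF refl])
    fix j assume "j \<in> {..<h}"
    then have "0 < M - j * D"
      by (intro term_pos) simp
    then show "multiplicity q (M - j * D) = card {k\<in>{1..M}. q^k dvd M - j * D}"
      using assms multiplicity_less_self[of q "M - j * D"]
      by (intro multiplicity_eq_card_prime_powers_dvd) simp_all
  qed
  also have "\<dots> = (\<Sum>k\<in>{1..M}. card {j\<in>{..<h}. q^k dvd M - j * D})"
    by (rule sum_card_filter_swap) auto
  also have "\<dots> \<le> (\<Sum>k\<in>{1..M}. card {m\<in>{1..h}. q^k dvd m} + (if q^k \<le> M then 1 else 0))"
    using assms by (intro sum_mono card_terms_prime_power_dvd_le) auto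
  also have "\<dots> = (\<Sum>k\<in>{1..M}. card {m\<in>{1..h}. q^k dvd m}) + card {k\<in>{1..M}. q^k \<le> M}"
    by (simp add: sum.distrib sum.If_cases Int_def)
  also have "(\<Sum>k\<in>{1..M}. card {m\<in>{1..h}. q^k dvd m}) = (\<Sum>m\<in>{1..h}. card {k\<in>{1..M}. q^k dvd m})"
    by (rule sum_card_filter_swap) auto
  also have "\<dots> = (\<Sum>m\<in>{1..h}. multiplicity q m)"
  proof (rule sum.cong[OF refl])
    fix m assume "m \<in> {1..h}"
    then show "card {k\<in>{1..M}. q^k dvd m} = multiplicity q m"
      using assms multiplicity_less_self[of q m] h_le_M
      by (intro multiplicity_eq_card_prime_powers_dvd[symmetric]) simp_all
  qed
  also have "\<dots> = multiplicity q (fact h :: nat)"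
    using assms by (simp add: fact_prod prime_elem_multiplicity_prod_distrib)
  finally show ?thesis .
qed

definition rough_terms :: "nat \<Rightarrow> nat set" where
  "rough_terms y = {j\<in>{..<h}. \<exists>p. prime p \<and> y < p \<and> p dvd M - j * D}"

lemma rough_terms_subset: "rough_terms y \<subseteq> {..<h}"
  by (auto simp: rough_terms_def)

lemma multiplicity_prod_terms:
  assumes "prime q" "A \<subseteq> {..<h}"
  shows "multiplicity q (\<Prod>j\<in>A. M - j * D) = (\<Sum>j\<in>A. multiplicity q (M - j * D))"
proof (rule prime_elem_multiplicity_prod_distrib)
  show "0 \<notin> (\<lambda>j. M - j * D) ` A"
  proof
    assume "0 \<in> (\<lambda>j. M - j * D) ` A"
    then obtain j where "j \<in> A" "M - j * D = 0"
      by auto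
    with assms(2) term_pos[of j] show False
      by auto
  qed
qed (use assms finite_subset in auto)

lemma sum_multiplicity_terms_eq_rough:
  assumes "prime q" "y < q"
  shows "(\<Sum>j<h. multiplicity q (M - j * D)) = (\<Sum>j\<in>rough_terms y. multiplicity q (M - j * D))"
proof (rule sum.mono_neutral_right)
  show "\<forall>j\<in>{..<h} - rough_terms y. multiplicity q (M - j * D) = 0"
    using assms by (auto simp: rough_terms_def not_dvd_imp_multiplicity_0)
qed (auto simp: rough_terms_def)

lemma prod_terms_dvd:
  "(\<Prod>j<h. M - j * D) dvd
    fact h * (\<Prod>p | prime p \<and> p \<le> y. p ^ card {k\<in>{1..M}. p^k \<le> M})
      * (\<Prod>j\<in>rough_terms y. M - j * D)"
proof (rule multiplicity_le_imp_dvd)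
  show "(\<Prod>j<h. M - j * D) \<noteq> 0"
    using prod_terms_pos[OF order_refl] by (rule gr_implies_not0)
  fix q :: nat assume "prime q"
  define P where "P = {p::nat. prime p \<and> p \<le> y}"
  define K where "K p = card {k\<in>{1..M}. p^k \<le> M}" for p :: nat
  have "finite P"
    unfolding P_def by (rule finite_subset[of _ "{..y}"]) auto
  have "(\<Prod>p\<in>P. p ^ K p) \<noteq> 0" "(\<Prod>j\<in>rough_terms y. M - j * D) \<noteq> 0"
    using \<open>finite P\<close> prod_terms_pos[OF rough_terms_subset] by (auto simp: P_def)
  then have "multiplicity q (fact h * (\<Prod>p\<in>P. p ^ K p) * (\<Prod>j\<in>rough_terms y. M - j * D))
      = multiplicity q (fact h :: nat) + multiplicity q (\<Prod>p\<in>P. p ^ K p)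
        + (\<Sum>j\<in>rough_terms y. multiplicity q (M - j * D))"
    using \<open>prime q\<close> by (simp add: prime_elem_multiplicity_mult_distrib multiplicity_prod_terms rough_terms_subset)
  moreover have "(\<Sum>j<h. multiplicity q (M - j * D))
      \<le> multiplicity q (fact h :: nat) + multiplicity q (\<Prod>p\<in>P. p ^ K p)
        + (\<Sum>j\<in>rough_terms y. multiplicity q (M - j * D))"
  proof (cases "q \<le> y")
    case True
    then have "multiplicity q (\<Prod>p\<in>P. p ^ K p) = K q"
      using \<open>finite P\<close> \<open>prime q\<close> by (subst multiplicity_prod_prime_powers) (auto simp: P_def)
    then show ?thesis
      using sum_multiplicity_terms_le[OF \<open>prime q\<close>] unfolding K_def by simp
  next
    case False
    then show ?thesis
      using sum_multiplicity_terms_eq_rough[OF \<open>prime q\<close>, of y] by simp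
  qed
  ultimately show "multiplicity q (\<Prod>j<h. M - j * D) \<le> multiplicity q
      (fact h * (\<Prod>p | prime p \<and> p \<le> y. p ^ card {k\<in>{1..M}. p^k \<le> M}) * (\<Prod>j\<in>rough_terms y. M - j * D))"
    using \<open>prime q\<close> by (simp add: multiplicity_prod_terms P_def K_def)
qed

lemma prod_terms_le:
  "(\<Prod>j<h. M - j * D) \<le> fact h * M ^ (card {p. prime p \<and> p \<le> y} + card (rough_terms y))"
proof -
  define P where "P = {p::nat. prime p \<and> p \<le> y}"
  have "finite P"
    unfolding P_def by (rule finite_subset[of _ "{..y}"]) auto
  have "0 < fact h * (\<Prod>p\<in>P. p ^ card {k\<in>{1..M}. p^k \<le> M}) * (\<Prod>j\<in>rough_terms y. M - j * D)"
    using \<open>finite P\<close> prod_terms_pos[OF rough_terms_subset]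
    by (auto simp: P_def prime_gt_0_nat intro!: prod_pos)
  then have "(\<Prod>j<h. M - j * D)
      \<le> fact h * (\<Prod>p\<in>P. p ^ card {k\<in>{1..M}. p^k \<le> M}) * (\<Prod>j\<in>rough_terms y. M - j * D)"
    using prod_terms_dvd[of y] unfolding P_def by (rule dvd_imp_le[rotated])
  also have "\<dots> \<le> fact h * (\<Prod>p\<in>P. M) * (\<Prod>j\<in>rough_terms y. M)"
  proof (intro mult_mono prod_mono conjI)
    fix p assume "p \<in> P"
    then show "p ^ card {k\<in>{1..M}. p^k \<le> M} \<le> M"
      using power_card_le[OF _ M_pos] by (simp add: P_def prime_gt_0_nat)
  qed auto
  also have "\<dots> = fact h * M ^ (card P + card (rough_terms y))"
    by (simp add: power_add)
  finally show ?thesis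
    unfolding P_def .
qed

text \<open>Term \<open>j\<close> is at least \<open>2h - 1 - j \<ge> j + 1\<close>, and even \<open>\<ge> 2 (j + 1)\<close> for the first \<open>h div 2\<close> terms.\<close>
lemma fact_mult_two_power_le_prod_terms: "fact h * 2^(h div 2) \<le> (\<Prod>j<h. M - j * D)"
proof -
  define f :: "nat \<Rightarrow> nat" where "f j = (if 2*(j+1) \<le> h then 2 else 1)" for j
  have "(\<Prod>j<h. Suc j * f j) \<le> (\<Prod>j<h. M - j * D)"
  proof (rule prod_mono)
    fix j assume "j \<in> {..<h}"
    have "2*h - 1 - j \<le> (2*h - 1 - j) * D"
      using D_pos by simp
    also have "\<dots> \<le> M - j * D"
      using term_ge[of j] \<open>j \<in> {..<h}\<close> by simp
    finally have "2*h - 1 - j \<le> M - j * D" .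
    with \<open>j \<in> {..<h}\<close> show "0 \<le> Suc j * f j \<and> Suc j * f j \<le> M - j * D"
      by (auto simp: f_def)
  qed
  moreover have "(\<Prod>j<h. Suc j * f j) = fact h * 2^(h div 2)"
  proof -
    have "{..<h} \<inter> {j. 2*(j+1) \<le> h} = {..<h div 2}"
      by auto
    then have "(\<Prod>j<h. f j) = 2^(h div 2)"
      unfolding f_def by (simp add: prod.If_cases)
    moreover have "(\<Prod>j<h. Suc j) = fact h"
      by (simp add: fact_prod_Suc lessThan_atLeast0)
    ultimately show ?thesis
      by (simp only: prod.distrib)
  qed
  ultimately show ?thesis
    by simp
qed

lemma half_power_le_prod_terms: "(real M / 2)^h \<le> real (\<Prod>j<h. M - j * D)"
proof -
  have "(real M / 2)^h = (\<Prod>j<h. real M / 2)"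
    by simp
  also have "\<dots> \<le> (\<Prod>j<h. real (M - j * D))"
  proof (rule prod_mono)
    fix j assume "j \<in> {..<h}"
    then have "real M \<le> real (2 * (M - j * D))"
      using M_le_twice_term[of j] by (simp only: of_nat_le_iff lessThan_iff)
    then show "0 \<le> real M / 2 \<and> real M / 2 \<le> real (M - j * D)"
      by simp
  qed
  finally show ?thesis
    by simp
qed

lemma card_rough_terms_lower_bound:
  assumes "5 \<le> h"
  shows "real h / (20 * ln (2 * real h))
    \<le> real (card {p. prime p \<and> p \<le> y} + card (rough_terms y))"
proof -
  let ?S = "card {p. prime p \<and> p \<le> y} + card (rough_terms y)"
  have "fact h * 2^(h div 2) \<le> fact h * M^?S"
    using fact_mult_two_power_le_prod_terms prod_terms_le[of y] by (rule order.trans)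
  then have two_power: "2^(h div 2) \<le> M^?S"
    by simp
  have "M \<ge> 2"
  proof (rule ccontr)
    assume "\<not> M \<ge> 2"
    then have "M^?S \<le> 1"
      by (cases ?S) (auto simp: le_Suc_eq)
    moreover have "(2::nat)^2 \<le> 2^(h div 2)"
      using assms by (intro power_increasing) auto
    ultimately show False
      using two_power by simp
  qed
  have "ln (2^(h div 2)) \<le> ln (real M ^ ?S)"
    using two_power \<open>M \<ge> 2\<close> by (subst ln_le_cancel_iff) (auto simp flip: of_nat_power)
  then have small: "real (h div 2) * ln 2 \<le> real ?S * ln (real M)"
    using \<open>M \<ge> 2\<close> by (simp add: ln_realpow)
  have "(real M / 2)^h \<le> real (fact h * M^?S)"
    using half_power_le_prod_terms prod_terms_le[of y] by (meson of_nat_le_iff order.trans)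
  also have "\<dots> \<le> real h ^ h * real M ^ ?S"
    by (simp add: mult_right_mono fact_le_power flip: of_nat_power)
  finally have "ln ((real M / 2)^h) \<le> ln (real h ^ h * real M ^ ?S)"
    using \<open>M \<ge> 2\<close> assms by (subst ln_le_cancel_iff) auto
  then have large: "real h * (ln (real M) - ln 2) \<le> real h * ln (real h) + real ?S * ln (real M)"
    using \<open>M \<ge> 2\<close> assms by (simp add: ln_realpow ln_mult ln_div)
  show ?thesis
    using exponent_lower_bound[OF assms _ _ small large] \<open>M \<ge> 2\<close> by simp
qed

lemma prime_dvd_two_terms_imp_dvd_diff:
  assumes "prime p" "j < h" "l < h" "p dvd M - j * D" "p dvd M - l * D"
  shows "int p dvd int j - int l"
proof (rule dvd_ap_terms_imp_dvd_index_diff)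
  show "coprime p D"
    using assms(1,2,4) coprime_term_D[of j] coprime_common_divisor not_prime_unit
    by (blast intro: prime_imp_coprime)
qed (use assms index_mult_le in auto)

text \<open>Within a window of \<open>y\<close> consecutive indices, a prime \<open>p > y\<close> divides at most one term,
  because it divides the difference of the indices of any two terms it divides.\<close>
lemma exists_private_prime_divisors:
  assumes "0 < y"
  obtains \<Lambda> P where "\<Lambda> \<subseteq> rough_terms y" "card (rough_terms y) \<le> card \<Lambda> * (h div y + 1)"
    "\<And>k. k \<in> \<Lambda> \<Longrightarrow> prime (P k) \<and> P k dvd M - k * D"
    "\<And>k l. k \<in> \<Lambda> \<Longrightarrow> l \<in> \<Lambda> \<Longrightarrow> l \<noteq> k \<Longrightarrow> \<not> P k dvd M - l * D"
proof -
  obtain w where w: "card (rough_terms y) \<le> card {j\<in>rough_terms y. w \<le> j \<and> j < w + y} * (h div y + 1)"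
    using exists_dense_window[OF rough_terms_subset assms] .
  define \<Lambda> where "\<Lambda> = {j\<in>rough_terms y. w \<le> j \<and> j < w + y}"
  define P where "P k = (SOME p. prime p \<and> y < p \<and> p dvd M - k * D)" for k
  have P: "prime (P k) \<and> y < P k \<and> P k dvd M - k * D" if "k \<in> \<Lambda>" for k
  proof -
    have "\<exists>p. prime p \<and> y < p \<and> p dvd M - k * D"
      using that by (auto simp: \<Lambda>_def rough_terms_def)
    then show ?thesis
      unfolding P_def by (rule someI_ex)
  qed
  have "\<not> P k dvd M - l * D" if "k \<in> \<Lambda>" "l \<in> \<Lambda>" "l \<noteq> k" for k l
  proof
    assume "P k dvd M - l * D"
    then have "int (P k) dvd int k - int l"
      using P[OF that(1)] that(1,2) rough_terms_subset
      by (intro prime_dvd_two_terms_imp_dvd_diff) (auto simp: \<Lambda>_def)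
    then have "int (P k) \<le> \<bar>int k - int l\<bar>"
      using that(3) dvd_imp_le_int[of "int k - int l" "int (P k)"] by simp
    moreover have "\<bar>int k - int l\<bar> < int y"
      using that(1,2) by (auto simp: \<Lambda>_def)
    ultimately show False
      using P[OF that(1)] by linarith
  qed
  with P show ?thesis
    using that[of \<Lambda> P] w by (auto simp: \<Lambda>_def)
qed

text \<open>With \<open>y = h div 1024\<close>, the primes up to \<open>y\<close> account for at most half of the lower bound on
  \<open>\<pi>(y) + |rough_terms y|\<close>, and the rough terms are spread over at most \<open>2049\<close> windows.\<close>
lemma exists_many_private_prime_divisors:
  assumes "4096 \<le> h"
    and small_primes: "real (card {p. prime p \<and> p \<le> h div 1024}) \<le> real h / (40 * ln (2 * real h))"
  obtains \<Lambda> P where "\<Lambda> \<subseteq> {..<h}" "real h \<le> real (card \<Lambda>) * (81960 * ln (2 * real h))"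
    "\<And>k. k \<in> \<Lambda> \<Longrightarrow> prime (P k) \<and> P k dvd M - k * D"
    "\<And>k l. k \<in> \<Lambda> \<Longrightarrow> l \<in> \<Lambda> \<Longrightarrow> l \<noteq> k \<Longrightarrow> \<not> P k dvd M - l * D"
proof -
  define y where "y = h div 1024"
  have "0 < y"
    using assms(1) by (simp add: y_def)
  obtain \<Lambda> P where "\<Lambda> \<subseteq> rough_terms y" and windows: "card (rough_terms y) \<le> card \<Lambda> * (h div y + 1)"
    and divisors: "\<And>k. k \<in> \<Lambda> \<Longrightarrow> prime (P k) \<and> P k dvd M - k * D"
      "\<And>k l. k \<in> \<Lambda> \<Longrightarrow> l \<in> \<Lambda> \<Longrightarrow> l \<noteq> k \<Longrightarrow> \<not> P k dvd M - l * D"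
    using exists_private_prime_divisors[OF \<open>0 < y\<close>] by metis
  have "h \<le> 2048 * y"
    using assms(1) by (simp add: y_def)
  then have "h div y \<le> 2048"
    using div_le_mono[of h "2048 * y" y] \<open>0 < y\<close> by simp
  then have "card \<Lambda> * (h div y + 1) \<le> card \<Lambda> * 2049"
    by (intro mult_le_mono2) simp
  then have "card (rough_terms y) \<le> card \<Lambda> * 2049"
    using windows by linarith
  then have "real (card (rough_terms y)) \<le> real (card \<Lambda> * 2049)"
    by (simp only: of_nat_le_iff)
  have "0 < ln (2 * real h)"
    using assms(1) by simp
  have "real h / (40 * ln (2 * real h)) \<le> real (card (rough_terms y))"
    using card_rough_terms_lower_bound[of y] small_primes assms(1) unfolding y_def by simp
  then have "real h \<le> real (card (rough_terms y)) * (40 * ln (2 * real h))"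
    using \<open>0 < ln (2 * real h)\<close> by (simp add: field_simps)
  also have "\<dots> \<le> real (card \<Lambda> * 2049) * (40 * ln (2 * real h))"
    using \<open>real (card (rough_terms y)) \<le> real (card \<Lambda> * 2049)\<close> \<open>0 < ln (2 * real h)\<close>
    by (intro mult_right_mono) auto
  finally have "real h \<le> real (card \<Lambda>) * (81960 * ln (2 * real h))"
    by simp
  then show ?thesis
    using that \<open>\<Lambda> \<subseteq> rough_terms y\<close> rough_terms_subset divisors by blast
qed

lemma half_length_le_if_terms_in_prodset:
  assumes "4096 \<le> h"
    and small_primes: "real (card {p. prime p \<and> p \<le> h div 1024}) \<le> real h / (40 * ln (2 * real h))"
    and "finite B" "0 < g" and prod: "\<And>k. k < h \<Longrightarrow> g * (M - k * D) \<in> prodset B"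
  shows "real h \<le> real (card B + 1) * (81960 * ln (2 * real h))"
proof -
  obtain \<Lambda> P where "\<Lambda> \<subseteq> {..<h}" and many: "real h \<le> real (card \<Lambda>) * (81960 * ln (2 * real h))"
    and divisors: "\<And>k. k \<in> \<Lambda> \<Longrightarrow> prime (P k) \<and> P k dvd M - k * D"
      "\<And>k l. k \<in> \<Lambda> \<Longrightarrow> l \<in> \<Lambda> \<Longrightarrow> l \<noteq> k \<Longrightarrow> \<not> P k dvd M - l * D"
    using exists_many_private_prime_divisors[OF assms(1) small_primes] by blast
  have "card \<Lambda> \<le> card B + 1"
  proof (rule card_le_if_private_prime_divisors[where e = "\<lambda>k. M - k * D" and P = P])
    show "finite \<Lambda>"
      using \<open>\<Lambda> \<subseteq> {..<h}\<close> finite_subset by blast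
    show "0 < M - k * D \<and> g * (M - k * D) \<in> prodset B" if "k \<in> \<Lambda>" for k
      using that \<open>\<Lambda> \<subseteq> {..<h}\<close> term_pos prod by blast
  qed (use assms(3,4) divisors in auto)
  then show ?thesis
    using assms(1) by (intro order.trans[OF many] mult_right_mono) auto
qed

end

lemma decreasing_ap_reduced_form:
  fixes a d :: int
  assumes "d < 0" "0 < N" "\<And>i. i < N \<Longrightarrow> 0 \<le> a + int i * d"
  obtains g D M :: nat where "0 < g" "0 < D" "coprime M D" "(N - 1) * D \<le> M"
    "\<And>i. i < N \<Longrightarrow> a + int i * d = int (g * (M - i * D))"
proof -
  define c where "c = gcd a d"
  define a' where "a' = a div c"
  define d' where "d' = d div c"
  have "0 < c"
    using assms(1) by (simp add: c_def)
  have factor: "a + int i * d = c * (a' + int i * d')" for i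
    by (simp add: a'_def d'_def c_def algebra_simps)
  have "coprime a' d'"
    unfolding a'_def d'_def c_def using assms(1) by (intro div_gcd_coprime) auto
  have "d = c * d'"
    by (simp add: d'_def c_def)
  with assms(1) \<open>0 < c\<close> have "d' < 0"
    by (simp add: mult_less_0_iff)
  have nonneg: "0 \<le> a' + int i * d'" if "i < N" for i
    using assms(3)[OF that] \<open>0 < c\<close> by (simp add: factor zero_le_mult_iff)
  define M where "M = nat a'"
  define D where "D = nat (- d')"
  have M: "int M = a'" and D: "int D = - d'"
    using nonneg[of 0] assms(2) \<open>d' < 0\<close> by (simp_all add: M_def D_def)
  have term_eq: "int (M - i * D) = a' + int i * d'" if "i < N" for i
  proof -
    have "int (i * D) \<le> int M"
      using nonneg[OF that] by (simp add: M D)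
    then have "i * D \<le> M"
      by (simp only: of_nat_le_iff)
    then show ?thesis
      by (simp add: M D)
  qed
  show ?thesis
  proof
    show "0 < nat c" "0 < D"
      using \<open>0 < c\<close> \<open>d' < 0\<close> by (simp_all add: D_def)
    show "coprime M D"
      using \<open>coprime a' d'\<close> by (simp add: coprime_int_iff[symmetric] M D)
    have "int ((N - 1) * D) \<le> int M"
      using nonneg[of "N - 1"] assms(2) by (simp add: M D)
    then show "(N - 1) * D \<le> M"
      by (simp only: of_nat_le_iff)
    show "a + int i * d = int (nat c * (M - i * D))" if "i < N" for i
      using term_eq[OF that] \<open>0 < c\<close> by (simp add: factor)
  qed
qed

text \<open>An increasing progression is handled by reading it backwards.\<close>
lemma ap_reduced_form:
  fixes a d :: int
  assumes "d \<noteq> 0" "0 < N" "\<And>i. i < N \<Longrightarrow> 0 \<le> a + int i * d"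
  obtains g D M :: nat where "0 < g" "0 < D" "coprime M D" "(N - 1) * D \<le> M"
    "\<And>j. j < N \<Longrightarrow> \<exists>i<N. a + int i * d = int (g * (M - j * D))"
proof (cases "d < 0")
  case True
  then show ?thesis
    using that decreasing_ap_reduced_form[OF True assms(2,3)] by metis
next
  case False
  let ?a = "a + int (N - 1) * d"
  have reverse: "?a + int j * - d = a + int (N - 1 - j) * d" if "j < N" for j
    using that by (simp add: algebra_simps)
  have "- d < 0"
    using False assms(1) by simp
  moreover have "0 \<le> ?a + int j * - d" if "j < N" for j
    unfolding reverse[OF that] using that by (intro assms(3)) simp
  ultimately obtain g D M :: nat where "0 < g" "0 < D" "coprime M D" "(N - 1) * D \<le> M"
    and terms: "\<And>j. j < N \<Longrightarrow> ?a + int j * - d = int (g * (M - j * D))"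
    using decreasing_ap_reduced_form[of "- d" N ?a] assms(2) by metis
  moreover have "\<exists>i<N. a + int i * d = int (g * (M - j * D))" if "j < N" for j
    using that terms[OF that] reverse[OF that] by (intro exI[of _ "N - 1 - j"]) auto
  ultimately show ?thesis
    using that by blast
qed

lemma prodset_eq_image: "prodset B = (\<lambda>(x, y). x * y) ` (B \<times> B)"
  by (auto simp: prodset_def)

lemma finite_prodset: "finite B \<Longrightarrow> finite (prodset B)"
  by (simp add: prodset_eq_image)

lemma card_prodset_le: "finite B \<Longrightarrow> card (prodset B) \<le> card B ^ 2"
  using card_image_le[of "B \<times> B" "\<lambda>(x, y). x * y"]
  by (simp add: prodset_eq_image card_cartesian_product power2_eq_square)

lemma ap_in_prodset_length_le:
  fixes a d :: int
  assumes "finite B" "d \<noteq> 0" "\<forall>i<N. a + int i * d \<in> int ` prodset B"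
  shows "N \<le> card B ^ 2"
proof -
  have "inj_on (\<lambda>i. a + int i * d) {..<N}"
    using assms(2) by (auto simp: inj_on_def)
  then have "N = card ((\<lambda>i. a + int i * d) ` {..<N})"
    by (simp add: card_image)
  also have "\<dots> \<le> card (int ` prodset B)"
    using assms by (intro card_mono) (auto simp: finite_prodset)
  also have "\<dots> \<le> card B ^ 2"
    using card_image_le[OF finite_prodset[OF assms(1)], of int] card_prodset_le[OF assms(1)] by linarith
  finally show ?thesis .
qed

lemma one_le_mult_ln:
  fixes n :: nat
  assumes "2 \<le> n"
  shows "1 \<le> real n * ln (real n)"
proof -
  have "ln 2 \<le> ln (real n)"
    using assms by simp
  then have "2/3 \<le> ln (real n)"
    using ln2_ge_two_thirds by linarith
  then show ?thesis
    using assms mult_mono[of 2 "real n" "2/3" "ln (real n)"] by simp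
qed

lemma length_le_of_half_length_le:
  fixes n N :: nat
  assumes "2 \<le> n" "N \<le> n^2" "real (N div 2) \<le> real (n + 1) * (81960 * ln (real N))"
  shows "real N \<le> 491761 * real n * ln (real n)"
proof -
  have "0 \<le> ln (real n)"
    using assms(1) by simp
  have "1 \<le> real n * ln (real n)"
    using one_le_mult_ln[OF assms(1)] .
  show ?thesis
  proof (cases "N = 0")
    case False
    have "ln (real N) \<le> ln (real n ^ 2)"
      using assms(2) False by (intro ln_mono) (simp_all flip: of_nat_power)
    also have "\<dots> = 2 * ln (real n)"
      using assms(1) by (simp add: ln_realpow)
    finally have "real (n + 1) * (81960 * ln (real N)) \<le> real (n + 1) * (81960 * (2 * ln (real n)))"
      by (intro mult_left_mono) auto
    with assms(3) have "real (N div 2) \<le> real (n + 1) * (81960 * (2 * ln (real n)))"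
      by linarith
    also have "\<dots> \<le> (3/2 * real n) * (163920 * ln (real n))"
    proof (rule mult_mono)
      show "real (n + 1) \<le> 3/2 * real n"
        using assms(1) by simp
    qed (use \<open>0 \<le> ln (real n)\<close> in auto)
    finally have "real (N div 2) \<le> 245880 * (real n * ln (real n))"
      by simp
    moreover have "real N \<le> 2 * real (N div 2) + 1"
      by linarith
    ultimately show ?thesis
      using \<open>1 \<le> real n * ln (real n)\<close> by simp
  qed (use \<open>1 \<le> real n * ln (real n)\<close> in simp)
qed

lemma long_ap_in_prodset_length_le:
  obtains H :: nat where "\<And>B a d N. finite B \<Longrightarrow> 2 \<le> card B \<Longrightarrow> d \<noteq> 0
    \<Longrightarrow> \<forall>i<N. a + int i * d \<in> int ` prodset B \<Longrightarrow> 2 * H \<le> N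
    \<Longrightarrow> real N \<le> 491761 * real (card B) * ln (real (card B))"
proof -
  obtain H where H: "\<And>h. H \<le> h \<Longrightarrow>
      real (card {p. prime p \<and> p \<le> h div 1024}) \<le> real h / (40 * ln (2 * real h))"
    using prime_counting_negligible by blast
  show ?thesis
  proof (rule that[of "max H 4096"])
    fix B :: "nat set" and a d :: int and N :: nat
    assume "finite B" "2 \<le> card B" "d \<noteq> 0" and ap: "\<forall>i<N. a + int i * d \<in> int ` prodset B"
      and "2 * max H 4096 \<le> N"
    define h where "h = N div 2"
    have "H \<le> h" "4096 \<le> h" "2 * h \<le> N"
      using \<open>2 * max H 4096 \<le> N\<close> by (auto simp: h_def)
    then have "0 < N"
      by simp
    moreover have "0 \<le> a + int i * d" if "i < N" for i
      using ap that by auto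
    ultimately obtain g D M :: nat where "0 < g" "0 < D" "coprime M D" "(N - 1) * D \<le> M"
      and terms: "\<And>j. j < N \<Longrightarrow> \<exists>i<N. a + int i * d = int (g * (M - j * D))"
      using ap_reduced_form[OF \<open>d \<noteq> 0\<close>] by blast
    have "(2*h - 1) * D \<le> M"
      using \<open>(N - 1) * D \<le> M\<close> \<open>2 * h \<le> N\<close> mult_le_mono1[of "2*h - 1" "N - 1" D] by linarith
    then interpret ap_upper_half h D M
      using \<open>0 < D\<close> \<open>coprime M D\<close> \<open>4096 \<le> h\<close> by unfold_locales simp_all
    have "g * (M - k * D) \<in> prodset B" if "k < h" for k
    proof -
      obtain i where "i < N" "a + int i * d = int (g * (M - k * D))"
        using terms[of k] \<open>k < h\<close> \<open>2 * h \<le> N\<close> by auto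
      then have "int (g * (M - k * D)) \<in> int ` prodset B"
        using ap by metis
      then show ?thesis
        by (simp only: inj_image_mem_iff[OF inj_of_nat])
    qed
    then have "real h \<le> real (card B + 1) * (81960 * ln (2 * real h))"
      using half_length_le_if_terms_in_prodset[OF \<open>4096 \<le> h\<close> H[OF \<open>H \<le> h\<close>] \<open>finite B\<close> \<open>0 < g\<close>]
      by blast
    also have "\<dots> \<le> real (card B + 1) * (81960 * ln (real N))"
      using \<open>2 * h \<le> N\<close> \<open>4096 \<le> h\<close> by (intro mult_left_mono) auto
    finally show "real N \<le> 491761 * real (card B) * ln (real (card B))"
      using \<open>2 \<le> card B\<close> ap_in_prodset_length_le[OF \<open>finite B\<close> \<open>d \<noteq> 0\<close> ap]
      by (intro length_le_of_half_length_le) (simp_all add: h_def)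
  qed
qed

theorem theorem1:
  shows "\<exists>C::real. C > 0 \<and>
    (\<forall>(B::nat set) (a::int) (d::int) (N::nat).
       finite B \<and> card B \<ge> 2 \<and> d \<noteq> 0 \<and>
       (\<forall>i<N. a + int i * d \<in> int ` prodset B)
       \<longrightarrow> real N \<le> C * real (card B) * ln (real (card B)))"
proof -
  obtain H where H: "\<And>B a d N. finite B \<Longrightarrow> 2 \<le> card B \<Longrightarrow> d \<noteq> 0
      \<Longrightarrow> \<forall>i<N. a + int i * d \<in> int ` prodset B \<Longrightarrow> 2 * H \<le> N
      \<Longrightarrow> real N \<le> 491761 * real (card B) * ln (real (card B))"
    using long_ap_in_prodset_length_le by blast
  define C :: real where "C = max (2 * real H) 491761"
  have "real N \<le> C * (real (card B) * ln (real (card B)))"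
    if "finite B" "2 \<le> card B" "d \<noteq> 0" "\<forall>i<N. a + int i * d \<in> int ` prodset B"
    for B :: "nat set" and a d :: int and N :: nat
  proof (cases "2 * H \<le> N")
    case True
    then have "real N \<le> 491761 * (real (card B) * ln (real (card B)))"
      using H[OF that] by (simp add: mult.assoc)
    also have "\<dots> \<le> C * (real (card B) * ln (real (card B)))"
      using one_le_mult_ln[OF that(2)] by (intro mult_right_mono) (auto simp: C_def)
    finally show ?thesis .
  next
    case False
    then have "real N \<le> C * 1"
      by (simp add: C_def)
    also have "\<dots> \<le> C * (real (card B) * ln (real (card B)))"
      using one_le_mult_ln[OF that(2)] by (intro mult_left_mono) (auto simp: C_def)
    finally show ?thesis .
  qed
  then show ?thesis
    by (intro exI[of _ C]) (auto simp: C_def mult.assoc)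
qed

end
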